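(* Let $C$ be a normal, closed cone with nonempty interior in a real Banach space. If $f:\operatorname{int} C\to\operatorname{int} C$ is $\tau$-condensing and $g:\operatorname{int} C\to\operatorname{int} C$ is $d_T$-nonexpansive, then $f+g$ is $\tau$-condensing.
   Context: A closed cone $C$ (closed convex, $\lambda C\subseteq C$ for $\lambda\ge0$, $C\cap(-C)=\{0\}$) induces the order $x\le y$ iff $y-x\in C$. $C$ is normal if there is $\kappa$ with $\|x\|\le\kappa\|y\|$ whenever $0\le x\le y$. Thompson's metric on $\operatorname{int}C$: $d_T(x,y)=\log\inf\{\beta\ge1:\beta^{-1}x\le y\le\beta x\}$; $g$ is $d_T$-nonexpansive if $d_T(g(x),g(y))\le d_T(x,y)$. For a $d_T$-bounded set $A\subseteq\operatorname{int}C$, $\tau(A)=\inf\{d>0: A$ has a finite cover by sets of $d_T$-diameter $\le d\}$. A continuous map $f:D\to\operatorname{int}C$ ($D\subseteq\operatorname{int}C$) is $\tau$-condensing if $\tau(f(A))<\tau(A)$ for every $d_T$-bounded $A\subseteq D$ with $\tau(A)>0$. *)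

theory Defs
  imports "HOL-Analysis.Analysis"
begin

definition cone_le :: "'a::real_vector set \<Rightarrow> 'a \<Rightarrow> 'a \<Rightarrow> bool" where
  "cone_le C x y \<longleftrightarrow> y - x \<in> C"

definition closed_proper_cone :: "'a::real_normed_vector set \<Rightarrow> bool" where
  "closed_proper_cone C \<longleftrightarrow> closed C \<and> convex C \<and> cone C \<and> C \<inter> uminus ` C = {0}"

definition normal_cone :: "'a::real_normed_vector set \<Rightarrow> bool" where
  "normal_cone C \<longleftrightarrow> (\<exists>\<kappa>. \<forall>x y. cone_le C 0 x \<and> cone_le C x y \<longrightarrow> norm x \<le> \<kappa> * norm y)"

definition thompson :: "'a::real_normed_vector set \<Rightarrow> 'a \<Rightarrow> 'a \<Rightarrow> real" where
  "thompson C x y = ln (Inf {\<beta>::real. \<beta> \<ge> 1 \<and> cone_le C (inverse \<beta> *\<^sub>R x) y \<and> cone_le C y (\<beta> *\<^sub>R x)})"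

definition thompson_bounded :: "'a::real_normed_vector set \<Rightarrow> 'a set \<Rightarrow> bool" where
  "thompson_bounded C A \<longleftrightarrow> A \<subseteq> interior C \<and> (\<exists>M. \<forall>x\<in>A. \<forall>y\<in>A. thompson C x y \<le> M)"

text \<open>Kuratowski measure of noncompactness w.r.t. Thompson's metric (value \<infinity> if no finite
  cover with bounded diameter exists).\<close>
definition tau :: "'a::real_normed_vector set \<Rightarrow> 'a set \<Rightarrow> ereal" where
  "tau C A = Inf {ereal d | d. d > 0 \<and> (\<exists>F. finite F \<and> A \<subseteq> \<Union>F \<and>
      (\<forall>S\<in>F. S \<subseteq> interior C \<and> (\<forall>x\<in>S. \<forall>y\<in>S. thompson C x y \<le> d)))}"

definition tau_condensing :: "'a::real_normed_vector set \<Rightarrow> 'a set \<Rightarrow> ('a \<Rightarrow> 'a) \<Rightarrow> bool" where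
  "tau_condensing C D f \<longleftrightarrow> continuous_on D f \<and> f ` D \<subseteq> interior C \<and>
     (\<forall>A. A \<subseteq> D \<and> thompson_bounded C A \<and> tau C A > 0 \<longrightarrow> tau C (f ` A) < tau C A)"

definition thompson_nonexpansive :: "'a::real_normed_vector set \<Rightarrow> ('a \<Rightarrow> 'a) \<Rightarrow> bool" where
  "thompson_nonexpansive C g \<longleftrightarrow> g ` interior C \<subseteq> interior C \<and>
     (\<forall>x\<in>interior C. \<forall>y\<in>interior C. thompson C (g x) (g y) \<le> thompson C x y)"

end

theory Submission
  imports Defs
begin

(* Since the cone is normal, Thompson-small perturbations are norm-small, so a Thompson-
   nonexpansive g is continuous and f + g is continuous; it maps int C into itself because
   int C + C is contained in int C.  For the condensing estimate let tau(A) = t.  Cut A into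
   finitely many pieces on which g a varies by a factor at most gamma (close to e^t) and f a by
   a factor at most sigma < e^t.  As f(A) is covered by finitely many Thompson-bounded sets and
   g(A) is Thompson-bounded, f a dominates a fixed fraction k > 0 of f a + g a on all of A.
   Hence on each piece f a + g a varies by a factor at most gamma - (gamma - sigma) k, which is
   below e^t, so tau((f + g)(A)) < t. *)

lemma convex_cone_if_closed_proper_cone: "closed_proper_cone C \<Longrightarrow> convex_cone C"
  unfolding closed_proper_cone_def convex_cone_def conic_def cone_def by auto

lemma cone_le_trans:
  assumes "convex_cone C" "cone_le C x y" "cone_le C y z"
  shows "cone_le C x z"
  using convex_cone_add[OF assms(1), of "z - y" "y - x"] assms(2,3) by (simp add: cone_le_def)

lemma cone_le_add:
  assumes "convex_cone C" "cone_le C x y" "cone_le C x' y'"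
  shows "cone_le C (x + x') (y + y')"
  using convex_cone_add[OF assms(1), of "y - x" "y' - x'"] assms(2,3)
  by (simp add: cone_le_def algebra_simps)

lemma cone_le_scaleR:
  assumes "convex_cone C" "cone_le C x y" "0 \<le> c"
  shows "cone_le C (c *\<^sub>R x) (c *\<^sub>R y)"
  using convex_cone_scaleR[OF assms(1,3), of "y - x"] assms(2)
  by (simp add: cone_le_def scaleR_diff_right)

lemma cone_le_scaleR_left:
  assumes "convex_cone C" "x \<in> C" "a \<le> b"
  shows "cone_le C (a *\<^sub>R x) (b *\<^sub>R x)"
  using convex_cone_scaleR[OF assms(1), of "b - a" x] assms(2,3)
  by (simp add: cone_le_def scaleR_diff_left)

lemma interior_cone_dominates:
  fixes x :: "'a::real_normed_vector"
  assumes "x \<in> interior C"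
  obtains c where "c > 0" "cone_le C (c *\<^sub>R y) x"
proof -
  obtain r where r: "r > 0" "ball x r \<subseteq> C"
    using assms by (meson mem_interior)
  define c where "c = r / (norm y + 1)"
  have ny: "norm y + 1 > 0"
    by (simp add: add_nonneg_pos)
  have c: "c > 0"
    using r ny by (simp add: c_def)
  have "norm (c *\<^sub>R y) < r"
    using r ny by (simp add: c_def divide_less_eq mult_strict_left_mono)
  then have "x - c *\<^sub>R y \<in> C"
    using r by (auto simp: dist_norm)
  then show ?thesis
    using that c by (simp add: cone_le_def)
qed

lemma interior_cone_add:
  fixes x :: "'a::real_normed_vector"
  assumes "convex_cone C" "x \<in> interior C" "y \<in> C"
  shows "x + y \<in> interior C"
proof -
  obtain r where r: "r > 0" "ball x r \<subseteq> C"
    using assms(2) by (meson mem_interior)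
  have "ball (x + y) r \<subseteq> C"
  proof
    fix z
    assume "z \<in> ball (x + y) r"
    then have "z - y \<in> C"
      using r by (auto simp: dist_norm algebra_simps)
    then show "z \<in> C"
      using convex_cone_add[OF assms(1) _ assms(3)] by fastforce
  qed
  then show ?thesis
    using r by (meson mem_interior)
qed

definition cone_comparable :: "'a::real_vector set \<Rightarrow> real \<Rightarrow> 'a \<Rightarrow> 'a \<Rightarrow> bool" where
  "cone_comparable C \<beta> x y \<longleftrightarrow> cone_le C x (\<beta> *\<^sub>R y) \<and> cone_le C y (\<beta> *\<^sub>R x)"

lemma cone_le_inverse_scaleR_iff:
  assumes "convex_cone C" "\<beta> > 0"
  shows "cone_le C (inverse \<beta> *\<^sub>R x) y \<longleftrightarrow> cone_le C x (\<beta> *\<^sub>R y)"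
proof
  assume "cone_le C (inverse \<beta> *\<^sub>R x) y"
  then show "cone_le C x (\<beta> *\<^sub>R y)"
    using cone_le_scaleR[OF assms(1), of _ _ \<beta>] assms(2) by fastforce
next
  assume "cone_le C x (\<beta> *\<^sub>R y)"
  then show "cone_le C (inverse \<beta> *\<^sub>R x) y"
    using cone_le_scaleR[OF assms(1), of _ _ "inverse \<beta>"] assms(2) by fastforce
qed

lemma thompson_eq_Inf_cone_comparable:
  assumes "convex_cone C"
  shows "thompson C x y = ln (Inf {\<beta>. 1 \<le> \<beta> \<and> cone_comparable C \<beta> x y})"
proof -
  have "{\<beta>::real. \<beta> \<ge> 1 \<and> cone_le C (inverse \<beta> *\<^sub>R x) y \<and> cone_le C y (\<beta> *\<^sub>R x)}
      = {\<beta>. 1 \<le> \<beta> \<and> cone_comparable C \<beta> x y}"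
    using cone_le_inverse_scaleR_iff[OF assms] by (auto simp: cone_comparable_def)
  then show ?thesis
    by (simp add: thompson_def)
qed

lemma cone_comparable_mono:
  assumes "convex_cone C" "x \<in> C" "y \<in> C" "cone_comparable C \<beta> x y" "\<beta> \<le> \<beta>'"
  shows "cone_comparable C \<beta>' x y"
  using assms cone_le_trans[OF assms(1)] cone_le_scaleR_left[OF assms(1)]
  unfolding cone_comparable_def by meson

lemma cone_comparable_exists:
  fixes C :: "'a::real_normed_vector set"
  assumes C: "convex_cone C" and x: "x \<in> interior C" and y: "y \<in> interior C"
  obtains \<beta> where "1 \<le> \<beta>" "cone_comparable C \<beta> x y"
proof -
  have xC: "x \<in> C" and yC: "y \<in> C"
    using x y interior_subset by auto
  obtain c where c: "c > 0" "cone_le C (c *\<^sub>R x) y"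
    using interior_cone_dominates[OF y] by blast
  obtain c' where c': "c' > 0" "cone_le C (c' *\<^sub>R y) x"
    using interior_cone_dominates[OF x] by blast
  define \<beta> where "\<beta> = max 1 (max (inverse c) (inverse c'))"
  have "cone_le C x (inverse c *\<^sub>R y)"
    using cone_le_inverse_scaleR_iff[OF C, of "inverse c"] c by simp
  then have "cone_le C x (\<beta> *\<^sub>R y)"
    using cone_le_trans[OF C _ cone_le_scaleR_left[OF C yC]] by (simp add: \<beta>_def)
  moreover have "cone_le C y (inverse c' *\<^sub>R x)"
    using cone_le_inverse_scaleR_iff[OF C, of "inverse c'"] c' by simp
  then have "cone_le C y (\<beta> *\<^sub>R x)"
    using cone_le_trans[OF C _ cone_le_scaleR_left[OF C xC]] by (simp add: \<beta>_def)
  ultimately show ?thesis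
    using that[of \<beta>] by (simp add: \<beta>_def cone_comparable_def)
qed

lemma thompson_le_ln:
  assumes "convex_cone C" "1 \<le> \<beta>" "cone_comparable C \<beta> x y"
  shows "thompson C x y \<le> ln \<beta>"
proof -
  let ?S = "{\<beta>. 1 \<le> \<beta> \<and> cone_comparable C \<beta> x y}"
  have "\<beta> \<in> ?S"
    using assms by simp
  moreover have "bdd_below ?S"
    by (rule bdd_belowI[of _ 1]) auto
  ultimately have "1 \<le> Inf ?S" "Inf ?S \<le> \<beta>"
    by (auto intro: cInf_greatest cInf_lower)
  then show ?thesis
    by (simp add: thompson_eq_Inf_cone_comparable[OF assms(1)])
qed

lemma
  fixes C :: "'a::real_normed_vector set"
  assumes C: "convex_cone C" and x: "x \<in> interior C" and y: "y \<in> interior C"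
  shows thompson_nonneg: "0 \<le> thompson C x y"
    and cone_comparable_exp_thompson: "closed C \<Longrightarrow> cone_comparable C (exp (thompson C x y)) x y"
proof -
  let ?S = "{\<beta>. 1 \<le> \<beta> \<and> cone_comparable C \<beta> x y}"
  have ne: "?S \<noteq> {}"
    using cone_comparable_exists[OF C x y] by blast
  have Inf_ge: "1 \<le> Inf ?S"
    using ne by (auto intro: cInf_greatest)
  then show "0 \<le> thompson C x y"
    by (simp add: thompson_eq_Inf_cone_comparable[OF C])
  assume "closed C"
  then have "closed ?S"
    unfolding cone_comparable_def cone_le_def
    by (intro closed_Collect_conj closed_Collect_le continuous_closed_vimage[of C, unfolded vimage_def])
      (auto intro!: continuous_intros)
  then have "Inf ?S \<in> ?S"
    using ne by (intro closed_contains_Inf) (auto intro: bdd_belowI[of _ 1])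
  with Inf_ge show "cone_comparable C (exp (thompson C x y)) x y"
    by (simp add: thompson_eq_Inf_cone_comparable[OF C])
qed

lemma cone_comparable_of_thompson_le:
  fixes C :: "'a::real_normed_vector set"
  assumes "convex_cone C" "closed C" "x \<in> interior C" "y \<in> interior C" "thompson C x y \<le> L"
  shows "cone_comparable C (exp L) x y"
  using cone_comparable_mono[OF assms(1) _ _ cone_comparable_exp_thompson[OF assms(1,3,4,2)]]
    assms(3-5) interior_subset by auto

lemma cone_comparable_near:
  fixes x :: "'a::real_normed_vector"
  assumes C: "convex_cone C" and r: "ball x r \<subseteq> C" and \<rho>: "0 < \<rho>" "\<rho> < 1"
    and y: "dist y x < r * \<rho>"
  shows "cone_comparable C (inverse (1 - \<rho>)) x y"
proof -
  define h where "h = (1 / \<rho>) *\<^sub>R (y - x)"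
  have "norm h < r"
    using y \<rho> by (simp add: h_def dist_norm divide_less_eq mult.commute)
  then have xh: "x + h \<in> C" "x - h \<in> C"
    using r by (auto simp: dist_norm subset_iff)
  have xC: "x \<in> C"
    using r \<open>norm h < r\<close> by (meson centre_in_ball norm_ge_zero order_le_less_trans subsetD)
  have "\<rho> *\<^sub>R (x + h) = y - (1 - \<rho>) *\<^sub>R x" "\<rho> *\<^sub>R (x - h) = (1 + \<rho>) *\<^sub>R x - y"
    using \<rho> by (simp_all add: h_def algebra_simps)
  then have lower: "cone_le C ((1 - \<rho>) *\<^sub>R x) y" and upper: "cone_le C y ((1 + \<rho>) *\<^sub>R x)"
    using convex_cone_scaleR[OF C, of \<rho>] xh \<rho> unfolding cone_le_def by (metis less_imp_le)+
  have "cone_le C x (inverse (1 - \<rho>) *\<^sub>R y)"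
    using lower cone_le_inverse_scaleR_iff[OF C, of "inverse (1 - \<rho>)"] \<rho> by simp
  moreover have "1 + \<rho> \<le> inverse (1 - \<rho>)"
    using \<rho> mult_left_le_one_le[of "1 - \<rho>" "1 + \<rho>"]
    by (simp add: field_simps power2_eq_square)
  then have "cone_le C y (inverse (1 - \<rho>) *\<^sub>R x)"
    using cone_le_trans[OF C upper cone_le_scaleR_left[OF C xC]] by blast
  ultimately show ?thesis
    by (simp add: cone_comparable_def)
qed

lemma thompson_tendsto_0:
  fixes C :: "'a::real_normed_vector set"
  assumes C: "convex_cone C" and x: "x \<in> interior C"
  shows "((\<lambda>y. thompson C x y) \<longlongrightarrow> 0) (at x within interior C)"
  unfolding tendsto_iff
proof (intro allI impI)
  fix \<epsilon> :: real
  assume "0 < \<epsilon>"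
  obtain r where r: "r > 0" "ball x r \<subseteq> C"
    using x by (meson mem_interior)
  define \<rho> where "\<rho> = 1 - exp (- \<epsilon> / 2)"
  have \<rho>: "0 < \<rho>" "\<rho> < 1" "inverse (1 - \<rho>) = exp (\<epsilon> / 2)"
    using \<open>0 < \<epsilon>\<close> by (simp_all add: \<rho>_def exp_minus inverse_less_1_iff)
  have "thompson C x y < \<epsilon>" if "dist y x < r * \<rho>" for y
  proof -
    have "thompson C x y \<le> ln (inverse (1 - \<rho>))"
      using \<rho> that \<open>0 < \<epsilon>\<close> by (intro thompson_le_ln[OF C] cone_comparable_near[OF C r(2)]) auto
    then show ?thesis
      using \<rho>(3) \<open>0 < \<epsilon>\<close> by simp
  qed
  moreover have "0 < r * \<rho>"
    using r \<rho> by simp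
  ultimately show "\<forall>\<^sub>F y in at x within interior C. dist (thompson C x y) 0 < \<epsilon>"
    unfolding eventually_at using thompson_nonneg[OF C x] by fastforce
qed

lemma norm_diff_le_cone_comparable:
  assumes C: "convex_cone C" and \<kappa>: "\<forall>u v. cone_le C 0 u \<and> cone_le C u v \<longrightarrow> norm u \<le> \<kappa> * norm v"
    and \<beta>: "1 \<le> \<beta>" and xy: "cone_comparable C \<beta> x y"
  shows "norm (y - x) \<le> (\<bar>\<kappa>\<bar> + 1) * (\<beta> - inverse \<beta>) * norm x"
proof -
  define w where "w = y - inverse \<beta> *\<^sub>R x"
  have "cone_le C 0 w"
    using xy cone_le_inverse_scaleR_iff[OF C, of \<beta> x y] \<beta>
    by (simp add: cone_comparable_def cone_le_def w_def)
  moreover have "cone_le C w ((\<beta> - inverse \<beta>) *\<^sub>R x)"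
    using xy by (simp add: cone_comparable_def cone_le_def w_def algebra_simps)
  ultimately have "norm w \<le> \<kappa> * norm ((\<beta> - inverse \<beta>) *\<^sub>R x)"
    using \<kappa> by blast
  also have "\<dots> \<le> \<bar>\<kappa>\<bar> * norm ((\<beta> - inverse \<beta>) *\<^sub>R x)"
    by (simp add: mult_right_mono)
  also have "norm ((\<beta> - inverse \<beta>) *\<^sub>R x) = (\<beta> - inverse \<beta>) * norm x"
    using \<beta> inverse_le_1_iff[of \<beta>] by simp
  finally have w: "norm w \<le> \<bar>\<kappa>\<bar> * ((\<beta> - inverse \<beta>) * norm x)" .
  have "1 - inverse \<beta> \<le> \<beta> - inverse \<beta>" "0 \<le> 1 - inverse \<beta>"
    using \<beta> by (simp_all add: inverse_le_1_iff)
  then have "norm ((1 - inverse \<beta>) *\<^sub>R x) \<le> (\<beta> - inverse \<beta>) * norm x"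
    by (simp add: mult_right_mono)
  moreover have "y - x = w - (1 - inverse \<beta>) *\<^sub>R x"
    by (simp add: w_def algebra_simps)
  ultimately show ?thesis
    using w norm_triangle_ineq4[of w "(1 - inverse \<beta>) *\<^sub>R x"] by (simp add: algebra_simps)
qed

lemma continuous_on_thompson_nonexpansive:
  fixes C :: "'a::real_normed_vector set"
  assumes C: "convex_cone C" "closed C" and "normal_cone C" and g: "thompson_nonexpansive C g"
  shows "continuous_on (interior C) g"
  unfolding continuous_on_def
proof
  fix x
  assume x: "x \<in> interior C"
  obtain \<kappa> where \<kappa>: "\<forall>u v. cone_le C 0 u \<and> cone_le C u v \<longrightarrow> norm u \<le> \<kappa> * norm v"
    using \<open>normal_cone C\<close> by (auto simp: normal_cone_def)
  have gI: "\<And>y. y \<in> interior C \<Longrightarrow> g y \<in> interior C"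
    and g_le: "\<And>y. y \<in> interior C \<Longrightarrow> thompson C (g x) (g y) \<le> thompson C x y"
    using g x by (auto simp: thompson_nonexpansive_def)
  let ?T = "\<lambda>y. thompson C (g x) (g y)"
  have near: "\<forall>\<^sub>F y in at x within interior C. y \<in> interior C"
    by (simp add: eventually_at_filter)
  have "\<forall>\<^sub>F y in at x within interior C. 0 \<le> ?T y"
    using near by (rule eventually_mono) (use gI x thompson_nonneg[OF C(1)] in blast)
  moreover have "\<forall>\<^sub>F y in at x within interior C. ?T y \<le> thompson C x y"
    using near by (rule eventually_mono) (rule g_le)
  ultimately have "(?T \<longlongrightarrow> 0) (at x within interior C)"
    by (rule tendsto_sandwich[OF _ _ tendsto_const thompson_tendsto_0[OF C(1) x]])
  then have lim: "((\<lambda>y. exp (?T y) - inverse (exp (?T y))) \<longlongrightarrow> exp 0 - inverse (exp 0))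
      (at x within interior C)"
    by (intro tendsto_diff tendsto_exp tendsto_inverse) simp_all
  have bound_0: "((\<lambda>y. (\<bar>\<kappa>\<bar> + 1) * (exp (?T y) - inverse (exp (?T y))) * norm (g x)) \<longlongrightarrow> 0)
      (at x within interior C)"
    using tendsto_mult_right[OF tendsto_mult_left[OF lim, of "\<bar>\<kappa>\<bar> + 1"], of "norm (g x)"] by simp
  have "\<forall>\<^sub>F y in at x within interior C.
      norm (g y - g x) \<le> (\<bar>\<kappa>\<bar> + 1) * (exp (?T y) - inverse (exp (?T y))) * norm (g x)"
    using near
  proof (rule eventually_mono)
    fix y
    assume y: "y \<in> interior C"
    have "1 \<le> exp (?T y)"
      using thompson_nonneg[OF C(1) gI[OF x] gI[OF y]] by simp
    then show "norm (g y - g x) \<le> (\<bar>\<kappa>\<bar> + 1) * (exp (?T y) - inverse (exp (?T y))) * norm (g x)"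
      by (rule norm_diff_le_cone_comparable[OF C(1) \<kappa> _
            cone_comparable_exp_thompson[OF C(1) gI[OF x] gI[OF y] C(2)]])
  qed
  then show "(g \<longlongrightarrow> g x) (at x within interior C)"
    by (rule LIM_zero_cancel[OF Lim_null_comparison[OF _ bound_0]])
qed

definition thompson_diam_le :: "'a::real_normed_vector set \<Rightarrow> real \<Rightarrow> 'a set \<Rightarrow> bool" where
  "thompson_diam_le C d S \<longleftrightarrow> S \<subseteq> interior C \<and> (\<forall>x\<in>S. \<forall>y\<in>S. thompson C x y \<le> d)"

lemma tau_eq_Inf_thompson_diam_le:
  "tau C A = Inf {ereal d | d. d > 0 \<and> (\<exists>F. finite F \<and> A \<subseteq> \<Union>F \<and> (\<forall>S\<in>F. thompson_diam_le C d S))}"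
  by (simp add: tau_def thompson_diam_le_def)

lemma thompson_bounded_if_diam_le: "thompson_diam_le C d S \<Longrightarrow> thompson_bounded C S"
  by (auto simp: thompson_diam_le_def thompson_bounded_def)

lemma tau_le_ereal:
  assumes "d > 0" "finite F" "A \<subseteq> \<Union>F" "\<forall>S\<in>F. thompson_diam_le C d S"
  shows "tau C A \<le> ereal d"
  unfolding tau_eq_Inf_thompson_diam_le by (rule Inf_lower) (use assms in blast)

lemma tau_less_ereal_E:
  assumes "tau C A < ereal e"
  obtains d F where "d > 0" "d < e" "finite F" "A \<subseteq> \<Union>F" "\<forall>S\<in>F. thompson_diam_le C d S"
  using assms unfolding tau_eq_Inf_thompson_diam_le Inf_less_iff by auto

lemma tau_less_PInf_if_thompson_bounded:
  assumes "thompson_bounded C A"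
  shows "tau C A < \<infinity>"
proof -
  obtain M where "A \<subseteq> interior C" "\<forall>x\<in>A. \<forall>y\<in>A. thompson C x y \<le> M"
    using assms by (auto simp: thompson_bounded_def)
  then have "thompson_diam_le C (max M 1) A"
    by (auto simp: thompson_diam_le_def intro: max.coboundedI1)
  then have "tau C A \<le> ereal (max M 1)"
    by (intro tau_le_ereal[of _ "{A}"]) auto
  then show ?thesis
    by (rule order.strict_trans1) (metis PInfty_neq_ereal(1) ereal_less_PInfty)
qed

lemma thompson_bounded_ge_multiple:
  fixes C :: "'a::real_normed_vector set"
  assumes C: "convex_cone C" "closed C" and S: "thompson_bounded C S" and v: "v \<in> C"
  obtains c where "c > 0" "\<forall>x\<in>S. cone_le C (c *\<^sub>R v) x"
proof (cases "S = {}")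
  case True
  then show ?thesis
    using that[of 1] by simp
next
  case False
  then obtain p where p: "p \<in> S"
    by blast
  obtain M where SI: "S \<subseteq> interior C" and M: "\<forall>x\<in>S. \<forall>y\<in>S. thompson C x y \<le> M"
    using S by (auto simp: thompson_bounded_def)
  obtain c where c: "c > 0" "cone_le C (c *\<^sub>R v) p"
    using interior_cone_dominates[of p C v] p SI by blast
  have "cone_le C ((c / exp M) *\<^sub>R v) x" if x: "x \<in> S" for x
  proof -
    have "cone_le C p (exp M *\<^sub>R x)"
      using cone_comparable_of_thompson_le[OF C, of x p M] x p SI M
      by (auto simp: cone_comparable_def)
    then have "cone_le C (inverse (exp M) *\<^sub>R p) x"
      using cone_le_inverse_scaleR_iff[OF C(1)] by simp
    moreover have "cone_le C ((c / exp M) *\<^sub>R v) (inverse (exp M) *\<^sub>R p)"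
      using cone_le_scaleR[OF C(1) c(2), of "inverse (exp M)"] by (simp add: field_simps)
    ultimately show ?thesis
      using cone_le_trans[OF C(1)] by blast
  qed
  then show ?thesis
    using that[of "c / exp M"] c by simp
qed

lemma finite_Union_thompson_bounded_ge_multiple:
  fixes C :: "'a::real_normed_vector set"
  assumes C: "convex_cone C" "closed C" and "finite F" "\<forall>S\<in>F. thompson_bounded C S" and v: "v \<in> C"
  shows "\<exists>c>0. \<forall>x\<in>\<Union>F. cone_le C (c *\<^sub>R v) x"
  using assms(3,4)
proof (induction F rule: finite_induct)
  case empty
  then show ?case
    using zero_less_one by blast
next
  case (insert S F)
  obtain c where c: "c > 0" "\<forall>x\<in>\<Union>F. cone_le C (c *\<^sub>R v) x"
    using insert by blast
  obtain c' where c': "c' > 0" "\<forall>x\<in>S. cone_le C (c' *\<^sub>R v) x"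
    using thompson_bounded_ge_multiple[OF C _ v] insert.prems by blast
  have "cone_le C (min c c' *\<^sub>R v) (c *\<^sub>R v)" "cone_le C (min c c' *\<^sub>R v) (c' *\<^sub>R v)"
    by (simp_all add: cone_le_scaleR_left[OF C(1) v])
  then have "cone_le C (min c c' *\<^sub>R v) x" if "x \<in> \<Union>(insert S F)" for x
    using that c(2) c'(2) cone_le_trans[OF C(1)] by blast
  then show ?case
    using c c' by (intro exI[of _ "min c c'"]) simp
qed

lemma cone_le_fraction_of_sum:
  assumes C: "convex_cone C" and "c > 0" "cone_le C (c *\<^sub>R y) x"
  shows "cone_le C ((c / (1 + c)) *\<^sub>R (x + y)) x"
proof -
  have "(1 / (1 + c)) *\<^sub>R (x - c *\<^sub>R y) \<in> C"
    using convex_cone_scaleR[OF C] assms(2,3) by (simp add: cone_le_def)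
  moreover have "x - (c / (1 + c)) *\<^sub>R (x + y) = (1 / (1 + c)) *\<^sub>R (x - c *\<^sub>R y)"
  proof -
    have "1 - c / (1 + c) = 1 / (1 + c)" "c / (1 + c) = 1 / (1 + c) * c"
      using \<open>c > 0\<close> by (simp_all add: field_simps)
    moreover have "x - (c / (1 + c)) *\<^sub>R (x + y) = (1 - c / (1 + c)) *\<^sub>R x - (c / (1 + c)) *\<^sub>R y"
      by (simp add: algebra_simps)
    ultimately show ?thesis
      by (simp only: scaleR_diff_right scaleR_scaleR)
  qed
  ultimately show ?thesis
    by (simp add: cone_le_def)
qed

lemma exists_dominating_fraction:
  fixes C :: "'a::real_normed_vector set"
  assumes C: "convex_cone C" "closed C" and F: "finite F" "\<forall>S\<in>F. thompson_bounded C S"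
    and X: "X \<subseteq> \<Union>F" and Y: "thompson_bounded C Y"
  obtains k where "0 < k" "k < 1" "\<forall>x\<in>X. \<forall>y\<in>Y. cone_le C (k *\<^sub>R (x + y)) x"
proof (cases "Y = {}")
  case True
  then show ?thesis
    using that[of "1 / 2"] by simp
next
  case False
  then obtain u where u: "u \<in> Y"
    by blast
  obtain M where YI: "Y \<subseteq> interior C" and M: "\<forall>y\<in>Y. \<forall>y'\<in>Y. thompson C y y' \<le> M"
    using Y by (auto simp: thompson_bounded_def)
  obtain c where c: "c > 0" "\<forall>x\<in>\<Union>F. cone_le C (c *\<^sub>R u) x"
    using finite_Union_thompson_bounded_ge_multiple[OF C F] u YI interior_subset by blast
  define c' where "c' = c / exp M"
  have "cone_le C (c' *\<^sub>R y) x" if x: "x \<in> X" and y: "y \<in> Y" for x y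
  proof -
    have "cone_le C y (exp M *\<^sub>R u)"
      using cone_comparable_of_thompson_le[OF C, of y u M] y u YI M
      by (auto simp: cone_comparable_def)
    then have "cone_le C (c' *\<^sub>R y) (c *\<^sub>R u)"
      using cone_le_scaleR[OF C(1), of y "exp M *\<^sub>R u" c'] c(1) by (simp add: c'_def)
    then show ?thesis
      using c(2) x X cone_le_trans[OF C(1)] by blast
  qed
  moreover have "c' > 0"
    using c(1) by (simp add: c'_def)
  ultimately show ?thesis
    using that[of "c' / (1 + c')"] cone_le_fraction_of_sum[OF C(1)] by simp
qed

lemma cone_le_add_dominated:
  assumes C: "convex_cone C" and "cone_le C p' (\<sigma> *\<^sub>R p)" "cone_le C q' (\<gamma> *\<^sub>R q)"
    and dom: "cone_le C (k *\<^sub>R (p + q)) p" and "\<sigma> \<le> \<gamma>"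
  shows "cone_le C (p' + q') ((\<gamma> - (\<gamma> - \<sigma>) * k) *\<^sub>R (p + q))"
proof -
  have "cone_le C (p' + q') (\<sigma> *\<^sub>R p + \<gamma> *\<^sub>R q)"
    using cone_le_add[OF C] assms(2,3) .
  moreover have "(\<gamma> - \<sigma>) *\<^sub>R (p - k *\<^sub>R (p + q)) \<in> C"
    using convex_cone_scaleR[OF C] dom \<open>\<sigma> \<le> \<gamma>\<close> by (simp add: cone_le_def)
  then have "cone_le C (\<sigma> *\<^sub>R p + \<gamma> *\<^sub>R q) ((\<gamma> - (\<gamma> - \<sigma>) * k) *\<^sub>R (p + q))"
    by (simp add: cone_le_def algebra_simps)
  ultimately show ?thesis
    using cone_le_trans[OF C] by blast
qed

lemma cone_comparable_add:
  assumes C: "convex_cone C" and "cone_comparable C \<sigma> p p'" "cone_comparable C \<gamma> q q'"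
    and "cone_le C (k *\<^sub>R (p + q)) p" "cone_le C (k *\<^sub>R (p' + q')) p'" and "\<sigma> \<le> \<gamma>"
  shows "cone_comparable C (\<gamma> - (\<gamma> - \<sigma>) * k) (p + q) (p' + q')"
  using assms cone_le_add_dominated[OF C] unfolding cone_comparable_def by blast

lemma tau_add_image_le:
  fixes C :: "'a::real_normed_vector set" and f g :: "'b \<Rightarrow> 'a"
  assumes C: "convex_cone C" "closed C" and k: "0 \<le> k" "k \<le> 1" and d: "0 < df" "df \<le> dg"
    and dom: "\<forall>a\<in>A. cone_le C (k *\<^sub>R (f a + g a)) (f a)"
    and fA: "f ` A \<subseteq> interior C" and gA: "g ` A \<subseteq> interior C"
    and P: "finite P" "A \<subseteq> \<Union>P"
    and osc: "\<forall>B\<in>P. \<forall>a\<in>B. \<forall>b\<in>B. thompson C (f a) (f b) \<le> df \<and> thompson C (g a) (g b) \<le> dg"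
  shows "tau C ((\<lambda>a. f a + g a) ` A) \<le> ereal (ln (exp dg - (exp dg - exp df) * k))"
proof -
  define \<delta> where "\<delta> = exp dg - (exp dg - exp df) * k"
  have "0 \<le> (exp dg - exp df) * (1 - k)"
    using d k by simp
  then have "exp df \<le> \<delta>"
    by (simp add: \<delta>_def algebra_simps)
  moreover have "1 < exp df"
    using d by simp
  ultimately have \<delta>: "1 < \<delta>"
    by linarith
  have sum_I: "f a + g a \<in> interior C" if "a \<in> A" for a
    using interior_cone_add[OF C(1)] fA gA that interior_subset by blast
  have "thompson_diam_le C (ln \<delta>) ((\<lambda>a. f a + g a) ` (B \<inter> A))" if B: "B \<in> P" for B
    unfolding thompson_diam_le_def
  proof (intro conjI ballI subsetI)
    fix x y
    assume "x \<in> (\<lambda>a. f a + g a) ` (B \<inter> A)" "y \<in> (\<lambda>a. f a + g a) ` (B \<inter> A)"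
    then obtain a b where ab: "a \<in> B" "a \<in> A" "b \<in> B" "b \<in> A" "x = f a + g a" "y = f b + g b"
      by blast
    have "cone_comparable C (exp df) (f a) (f b)" "cone_comparable C (exp dg) (g a) (g b)"
      using osc B ab fA gA by (auto intro!: cone_comparable_of_thompson_le[OF C])
    moreover have "exp df \<le> exp dg"
      using d by simp
    ultimately have "cone_comparable C \<delta> x y"
      unfolding \<delta>_def ab(5,6) using dom ab by (intro cone_comparable_add[OF C(1)]) auto
    then show "thompson C x y \<le> ln \<delta>"
      using thompson_le_ln[OF C(1)] \<delta> by simp
  qed (use sum_I in blast)
  moreover have "(\<lambda>a. f a + g a) ` A \<subseteq> \<Union>((\<lambda>B. (\<lambda>a. f a + g a) ` (B \<inter> A)) ` P)"
    using P(2) by blast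
  ultimately show ?thesis
    unfolding \<delta>_def[symmetric] using P(1) \<delta> by (intro tau_le_ereal) auto
qed

lemma tau_add_image_le_covers:
  fixes C :: "'a::real_normed_vector set"
  assumes C: "convex_cone C" "closed C" and k: "0 \<le> k" "k \<le> 1" and d: "0 < df" "df \<le> dg"
    and dom: "\<forall>a\<in>A. cone_le C (k *\<^sub>R (f a + g a)) (f a)"
    and fA: "f ` A \<subseteq> interior C" and g: "thompson_nonexpansive C g"
    and FA: "finite FA" "A \<subseteq> \<Union>FA" "\<forall>B\<in>FA. thompson_diam_le C dg B"
    and FF: "finite FF" "f ` A \<subseteq> \<Union>FF" "\<forall>T\<in>FF. thompson_diam_le C df T"
  shows "tau C ((\<lambda>a. f a + g a) ` A) \<le> ereal (ln (exp dg - (exp dg - exp df) * k))"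
proof -
  have g_le: "\<And>a b. a \<in> interior C \<Longrightarrow> b \<in> interior C \<Longrightarrow> thompson C (g a) (g b) \<le> thompson C a b"
    using g by (auto simp: thompson_nonexpansive_def)
  have gA: "g ` A \<subseteq> interior C"
    using g FA(2,3) by (fastforce simp: thompson_nonexpansive_def thompson_diam_le_def)
  let ?P = "(\<lambda>(B, T). B \<inter> f -` T) ` (FA \<times> FF)"
  show ?thesis
  proof (rule tau_add_image_le[OF C k d dom fA gA])
    show "finite ?P"
      using FA(1) FF(1) by simp
    show "A \<subseteq> \<Union>?P"
      using FA(2) FF(2) by blast
    show "\<forall>B\<in>?P. \<forall>a\<in>B. \<forall>b\<in>B. thompson C (f a) (f b) \<le> df \<and> thompson C (g a) (g b) \<le> dg"
    proof (intro ballI)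
      fix B a b
      assume "B \<in> ?P" "a \<in> B" "b \<in> B"
      then obtain P T where PT: "P \<in> FA" "T \<in> FF" "a \<in> P" "b \<in> P" "f a \<in> T" "f b \<in> T"
        by auto
      have "thompson C (f a) (f b) \<le> df"
        using FF(3) PT by (auto simp: thompson_diam_le_def)
      moreover have "a \<in> interior C" "b \<in> interior C" "thompson C a b \<le> dg"
        using FA(3) PT by (auto simp: thompson_diam_le_def)
      then have "thompson C (g a) (g b) \<le> dg"
        by (rule order_trans[OF g_le])
      ultimately show "thompson C (f a) (f b) \<le> df \<and> thompson C (g a) (g b) \<le> dg"
        by simp
    qed
  qed
qed

lemma thompson_bounded_image:
  assumes "thompson_nonexpansive C g" "thompson_bounded C A"
  shows "thompson_bounded C (g ` A)"
proof -
  obtain M where AI: "A \<subseteq> interior C" and M: "\<forall>a\<in>A. \<forall>b\<in>A. thompson C a b \<le> M"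
    using assms(2) by (auto simp: thompson_bounded_def)
  have "thompson C (g a) (g b) \<le> M" if "a \<in> A" "b \<in> A" for a b
    using assms(1) AI M that unfolding thompson_nonexpansive_def by (meson order_trans subsetD)
  moreover have "g ` A \<subseteq> interior C"
    using assms(1) AI by (auto simp: thompson_nonexpansive_def)
  ultimately show ?thesis
    unfolding thompson_bounded_def by (intro conjI exI[of _ M]) auto
qed

lemma ln_mix_less:
  fixes k s t d D :: real
  assumes k: "0 < k" "k < 1" and "d < s" and D: "exp D < (exp t - exp s * k) / (1 - k)"
  shows "ln (exp D - (exp D - exp d) * k) < t"
proof -
  have "exp D * (1 - k) < exp t - exp s * k"
    using mult_strict_right_mono[OF D, of "1 - k"] k(2) by simp
  moreover have "exp d * k < exp s * k"
    using k(1) \<open>d < s\<close> by simp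
  ultimately have "exp D - (exp D - exp d) * k < exp t"
    by (simp add: algebra_simps)
  moreover have "0 < exp D * (1 - k) + exp d * k"
    using k by (intro add_pos_pos) simp_all
  then have "0 < exp D - (exp D - exp d) * k"
    by (simp add: algebra_simps)
  ultimately show ?thesis
    using ln_less_cancel_iff[of _ "exp t"] by simp
qed

lemma tau_add_image_less:
  fixes C :: "'a::real_normed_vector set"
  assumes C: "convex_cone C" "closed C"
    and fA: "f ` A \<subseteq> interior C" and g: "thompson_nonexpansive C g"
    and A: "thompson_bounded C A" "0 < tau C A" and f_less: "tau C (f ` A) < tau C A"
  shows "tau C ((\<lambda>a. f a + g a) ` A) < tau C A"
proof -
  obtain t where t: "tau C A = ereal t" "0 < t"
    using tau_less_PInf_if_thompson_bounded[OF A(1)] A(2) by (cases "tau C A") auto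
  obtain s where s: "tau C (f ` A) < ereal s" "s < t"
    using ereal_dense2[OF f_less] t(1) by auto
  obtain df FF where FF: "0 < df" "df < s" "finite FF" "f ` A \<subseteq> \<Union>FF"
    "\<forall>T\<in>FF. thompson_diam_le C df T"
    using tau_less_ereal_E[OF s(1)] by blast
  have "\<forall>T\<in>FF. thompson_bounded C T"
    using FF(5) thompson_bounded_if_diam_le by blast
  then obtain k where k: "0 < k" "k < 1"
    and "\<forall>x\<in>f ` A. \<forall>y\<in>g ` A. cone_le C (k *\<^sub>R (x + y)) x"
    using exists_dominating_fraction[OF C FF(3) _ FF(4) thompson_bounded_image[OF g A(1)]] by blast
  then have dom: "\<forall>a\<in>A. cone_le C (k *\<^sub>R (f a + g a)) (f a)"
    by blast
  define \<gamma> where "\<gamma> = (exp t - exp s * k) / (1 - k)"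
  have "exp t < \<gamma>"
    using k s(2) by (simp add: \<gamma>_def field_simps)
  moreover have "0 < \<gamma>"
    using calculation exp_gt_zero[of t] by linarith
  ultimately have t_less: "t < ln \<gamma>"
    using ln_less_cancel_iff[of "exp t" \<gamma>] by simp
  then obtain dA FA where FA: "0 < dA" "dA < ln \<gamma>" "finite FA" "A \<subseteq> \<Union>FA"
    "\<forall>B\<in>FA. thompson_diam_le C dA B"
    using t(1) tau_less_ereal_E[of C A "ln \<gamma>"] by auto
  define D where "D = max dA df"
  have "\<forall>B\<in>FA. thompson_diam_le C D B"
    using FA(5) by (auto simp: thompson_diam_le_def D_def intro: max.coboundedI1)
  then have "tau C ((\<lambda>a. f a + g a) ` A) \<le> ereal (ln (exp D - (exp D - exp df) * k))"
    using k FF(1) dom fA g FA(3,4) FF(3-5)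
    by (intro tau_add_image_le_covers[OF C]) (simp_all add: D_def)
  also have "ln (exp D - (exp D - exp df) * k) < t"
  proof (rule ln_mix_less[OF k FF(2)])
    have "D < ln \<gamma>"
      using FA(2) FF(2) s(2) t_less by (simp add: D_def)
    then have "exp D < \<gamma>"
      by (metis \<open>0 < \<gamma>\<close> exp_less_mono exp_ln)
    then show "exp D < (exp t - exp s * k) / (1 - k)"
      by (simp add: \<gamma>_def)
  qed
  finally show ?thesis
    using t(1) by simp
qed

theorem theorem2p5:
  fixes C :: "'a::banach set" and f g :: "'a \<Rightarrow> 'a"
  assumes "closed_proper_cone C"
    and "normal_cone C"
    and "interior C \<noteq> {}"
    and "tau_condensing C (interior C) f"
    and "thompson_nonexpansive C g"
  shows "tau_condensing C (interior C) (\<lambda>x. f x + g x)"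
proof -
  have C: "convex_cone C" "closed C"
    using assms(1) convex_cone_if_closed_proper_cone by (auto simp: closed_proper_cone_def)
  have f_cont: "continuous_on (interior C) f" and fI: "f ` interior C \<subseteq> interior C"
    and f_less: "\<And>A. A \<subseteq> interior C \<Longrightarrow> thompson_bounded C A \<Longrightarrow> 0 < tau C A \<Longrightarrow> tau C (f ` A) < tau C A"
    using assms(4) by (auto simp: tau_condensing_def)
  have gI: "g ` interior C \<subseteq> interior C"
    using assms(5) by (simp add: thompson_nonexpansive_def)
  have "continuous_on (interior C) (\<lambda>x. f x + g x)"
    using f_cont continuous_on_thompson_nonexpansive[OF C assms(2,5)] by (rule continuous_on_add)
  moreover have "(\<lambda>x. f x + g x) ` interior C \<subseteq> interior C"
    using interior_cone_add[OF C(1)] fI gI interior_subset by blast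
  moreover have "tau C ((\<lambda>x. f x + g x) ` A) < tau C A"
    if "A \<subseteq> interior C" "thompson_bounded C A" "0 < tau C A" for A
    using tau_add_image_less[OF C _ assms(5) that(2,3) f_less[OF that]] fI that(1) by blast
  ultimately show ?thesis
    by (simp add: tau_condensing_def)
qed

end
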